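(* Fix an integer $k\ge 0$, a link $i$ of a multi-link system, and $\#\in\{L,J\}$. Let $\mathfrak{V}_{L_i}^{(k+1)}=(V_0,\dots,V_{k+1})\in\mathbb{R}^{6(k+2)}$ be the comprehensive spatial velocity of link $i$ and $\mathfrak{V}_{L_i}^{(k)}=(V_0,\dots,V_k)$ its truncation, let $\mathfrak{h}_{\#_i}^{(k+1)}=(h_0,\dots,h_{k+1})\in\mathbb{R}^{6(k+2)}$ be the comprehensive (link or joint) momentum and $\mathfrak{h}_{\#_i}^{(k)}=(h_0,\dots,h_k)$ its truncation, and let the comprehensive force be $$\mathfrak{f}_{\#_i}^{(k)}=\mathfrak{U}\big([\mathfrak{V}_{L_i}^{(k)}\times^{*}_{6\cdot k}]\big)\,\mathfrak{h}_{\#_i}^{(k+1)}.$$ Suppose $\mathfrak{V}_{L_i}^{(k+1)}$ and $\mathfrak{h}_{\#_i}^{(k+1)}$ depend differentiably on a scalar parameter $\varepsilon$ and let $\delta$ denote $\frac{d}{d\varepsilon}$ at $\varepsilon=0$. Then $$\delta\mathfrak{f}_{\#_i}^{(k)}=\mathfrak{U}\big([\mathfrak{V}_{L_i}^{(k)}\times^{*}_{6\cdot k}]\big)\,\delta\mathfrak{h}_{\#_i}^{(k+1)}+\begin{bmatrix}[\mathfrak{h}_{\#_i}^{(k)}\,\hat{\times}^{*}_{6\cdot k}] & 0_{6(k+1)\times 6}\end{bmatrix}\delta\mathfrak{V}_{L_i}^{(k+1)}.$$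
   Context: Notation. For $u\in\mathbb{R}^3$, $[u\times]$ is the skew-symmetric cross-product matrix. For $u=(v_0,v_1)\in\mathbb{R}^6$, $[u\times_6]=\begin{bmatrix}[v_0\times]&0\\ [v_1\times]&[v_0\times]\end{bmatrix}$ and $[u\times^{*}_6]:=-[u\times_6]^{T}$. For a stacked vector $u=(u_0,\dots,u_k)\in\mathbb{R}^{6(k+1)}$, $[u\times^{*}_{6\cdot k}]$ is the block lower-triangular Toeplitz matrix with $(l,m)$ block $[u_{l-m}\times^{*}_6]$ for $l\ge m$ and zero blocks above the diagonal; $[x\,\hat{\times}^{*}_{6\cdot k}]$ is the matrix with $[x\,\hat{\times}^{*}_{6\cdot k}]\,y=[y\times^{*}_{6\cdot k}]\,x$ for all $y$. $N_{(1:k+1)}=\mathrm{diag}(1\cdot I_6,2\cdot I_6,\dots,(k+1)\cdot I_6)$. For $M\in\mathbb{R}^{6(k+1)\times 6(k+1)}$, $\mathfrak{U}(M):=\begin{bmatrix}M&0_{6(k+1)\times 6}\end{bmatrix}+\begin{bmatrix}0_{6(k+1)\times 6}&N_{(1:k+1)}\end{bmatrix}\in\mathbb{R}^{6(k+1)\times 6(k+2)}$. Comprehensive quantities are stacked vectors $(a,\tfrac{1}{1!}\dot a,\dots,\tfrac{1}{k!}a^{(k)})$ of a physical quantity and its scaled time derivatives; $\#=L$ refers to link quantities and $\#=J$ to quantities transmitted through the joint from the parent of link $i$ to link $i$, both expressed in the frame of link $i$. *)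

theory Defs
  imports "HOL-Analysis.Analysis"
begin

text \<open>Vectors of R^n are represented as functions nat => real (only indices < n matter),
  matrices as functions nat => nat => real (only indices in range matter).\<close>

type_synonym vec = "nat \<Rightarrow> real"
type_synonym mat = "nat \<Rightarrow> nat \<Rightarrow> real"

definition mat_vec :: "nat \<Rightarrow> nat \<Rightarrow> mat \<Rightarrow> vec \<Rightarrow> vec" where
  "mat_vec r c M x = (\<lambda>a. if a < r then (\<Sum>b<c. M a b * x b) else 0)"

definition vec_add :: "vec \<Rightarrow> vec \<Rightarrow> vec" where
  "vec_add x y = (\<lambda>a. x a + y a)"

definition skew3 :: "vec \<Rightarrow> mat" where
  "skew3 u = (\<lambda>a b.
     if a = 0 \<and> b = 1 then - u 2 else if a = 0 \<and> b = 2 then u 1 else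
     if a = 1 \<and> b = 0 then u 2 else if a = 1 \<and> b = 2 then - u 0 else
     if a = 2 \<and> b = 0 then - u 1 else if a = 2 \<and> b = 1 then u 0 else 0)"

definition cross6 :: "vec \<Rightarrow> mat" where
  "cross6 u = (\<lambda>a b.
     if a < 3 \<and> b < 3 then skew3 u a b
     else if 3 \<le> a \<and> a < 6 \<and> b < 3 then skew3 (\<lambda>j. u (j + 3)) (a - 3) b
     else if 3 \<le> a \<and> a < 6 \<and> 3 \<le> b \<and> b < 6 then skew3 u (a - 3) (b - 3)
     else 0)"

definition cross6_star :: "vec \<Rightarrow> mat" where
  "cross6_star u = (\<lambda>a b. - cross6 u b a)"

definition blk :: "vec \<Rightarrow> nat \<Rightarrow> vec" where
  "blk u j = (\<lambda>r. u (6 * j + r))"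

definition trunc :: "nat \<Rightarrow> vec \<Rightarrow> vec" where
  "trunc k u = (\<lambda>a. if a < 6 * (k + 1) then u a else 0)"

definition cross_star_6k :: "nat \<Rightarrow> vec \<Rightarrow> mat" where
  "cross_star_6k k u = (\<lambda>a b.
     if a < 6 * (k + 1) \<and> b < 6 * (k + 1) \<and> b div 6 \<le> a div 6
     then cross6_star (blk u (a div 6 - b div 6)) (a mod 6) (b mod 6) else 0)"

definition hat_cross_star_6k :: "nat \<Rightarrow> vec \<Rightarrow> mat" where
  "hat_cross_star_6k k x = (THE M.
     (\<forall>a b. (6 * (k + 1) \<le> a \<or> 6 * (k + 1) \<le> b) \<longrightarrow> M a b = 0) \<and>
     (\<forall>y. mat_vec (6 * (k + 1)) (6 * (k + 1)) M y
          = mat_vec (6 * (k + 1)) (6 * (k + 1)) (cross_star_6k k y) x))"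

definition Nmat :: "nat \<Rightarrow> mat" where
  "Nmat k = (\<lambda>a b. if a < 6 * (k + 1) \<and> a = b then real (a div 6 + 1) else 0)"

text \<open>U(M) = [M 0] + [0 N], a 6(k+1) x 6(k+2) matrix.\<close>
definition Umat :: "nat \<Rightarrow> mat \<Rightarrow> mat" where
  "Umat k M = (\<lambda>a b.
     if a < 6 * (k + 1) \<and> b < 6 * (k + 2) then
       (if b < 6 * (k + 1) then M a b else 0) + (if 6 \<le> b then Nmat k a (b - 6) else 0)
     else 0)"

definition pad_zero :: "nat \<Rightarrow> mat \<Rightarrow> mat" where
  "pad_zero k M = (\<lambda>a b. if a < 6 * (k + 1) \<and> b < 6 * (k + 1) then M a b else 0)"

definition comp_force :: "nat \<Rightarrow> vec \<Rightarrow> vec \<Rightarrow> vec" where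
  "comp_force k V h = mat_vec (6 * (k + 1)) (6 * (k + 2)) (Umat k (cross_star_6k k (trunc k V))) h"

end

theory Submission
  imports Defs
begin

text \<open>Every entry of \<open>[y \<times>*]\<close> is a linear form in the first \<open>6(k+1)\<close> coordinates of \<open>y\<close>,
  so \<open>f = U([V \<times>*]) h\<close> is bilinear in \<open>(V, h)\<close> and the product rule gives
  \<open>\<delta>f = U([V \<times>*]) \<delta>h + [\<delta>V \<times>*] h\<close>; the constant block \<open>N\<close> of \<open>U\<close> does not contribute.
  The defining property of the hat matrix turns \<open>[\<delta>V \<times>*] h\<close> into \<open>[h hat-\<times>*] \<delta>V\<close>; its definite
  description is proper because a matrix vanishing outside its block is determined by its action
  on unit vectors.\<close>

definition unit_vec :: "nat \<Rightarrow> vec" where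
  "unit_vec c = (\<lambda>j. if j = c then 1 else 0)"

lemma sum_mult_unit_vec:
  "j < n \<Longrightarrow> (\<Sum>c<n. y c * unit_vec c j) = y j"
  by (simp add: unit_vec_def if_distrib sum.delta cong: if_cong)

lemma mat_vec_unit_vec:
  assumes "a < r" "c < n"
  shows "mat_vec r n M (unit_vec c) a = M a c"
  using assms by (simp add: mat_vec_def unit_vec_def if_distrib sum.delta cong: if_cong)

lemma matrix_eqI_mat_vec:
  assumes "\<And>a b. r \<le> a \<or> n \<le> b \<Longrightarrow> M a b = 0"
      and "\<And>a b. r \<le> a \<or> n \<le> b \<Longrightarrow> M' a b = 0"
      and "\<And>y. mat_vec r n M y = mat_vec r n M' y"
  shows "M = M'"
proof (intro ext)
  fix a b
  show "M a b = M' a b"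
  proof (cases "a < r \<and> b < n")
    case True
    then show ?thesis
      using assms(3)[of "unit_vec b"] by (metis mat_vec_unit_vec)
  qed (use assms(1,2) in auto)
qed

lemma linear_form_unit_vec_expansion:
  fixes F :: "vec \<Rightarrow> real"
  assumes F: "\<And>y. F y = (\<Sum>i<m. y (g i) * C i)"
      and g: "\<And>i. i < m \<Longrightarrow> g i < n"
  shows "F y = (\<Sum>c<n. y c * F (unit_vec c))"
proof -
  have "(\<Sum>c<n. y c * F (unit_vec c)) = (\<Sum>i<m. (\<Sum>c<n. y c * unit_vec c (g i)) * C i)"
    by (simp add: F sum_distrib_left sum_distrib_right mult.assoc sum.swap[of _ "{..<n}"])
  also have "\<dots> = F y"
    using g by (simp add: F sum_mult_unit_vec)
  finally show ?thesis ..
qed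

lemma cross6_star_expansion:
  assumes "r < 6" "s < 6"
  shows "cross6_star u r s = (\<Sum>i<6. u i * cross6_star (unit_vec i) r s)"
proof -
  have six: "{..<6::nat} = {0, 1, 2, 3, 4, 5}" by auto
  have "r \<in> {0, 1, 2, 3, 4, 5}" "s \<in> {0, 1, 2, 3, 4, 5}"
    using assms by auto
  then show ?thesis
    by (elim insertE emptyE; hypsubst; simp add: six cross6_star_def cross6_def skew3_def unit_vec_def)
qed

lemma cross_star_6k_expansion:
  "cross_star_6k k y a b = (\<Sum>c<6 * (k + 1). y c * cross_star_6k k (unit_vec c) a b)"
proof (cases "a < 6 * (k + 1) \<and> b < 6 * (k + 1) \<and> b div 6 \<le> a div 6")
  case True
  define j where "j = a div 6 - b div 6"
  have "j \<le> k"
    using True unfolding j_def by auto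
  then have block_index: "6 * j + i < 6 * (k + 1)" if "i < 6" for i
    using that by presburger
  have entry: "cross_star_6k k y a b
      = (\<Sum>i<6. y (6 * j + i) * cross6_star (unit_vec i) (a mod 6) (b mod 6))" for y
    using True by (simp add: cross_star_6k_def j_def blk_def cross6_star_expansion)
  show ?thesis
    by (rule linear_form_unit_vec_expansion[where F = "\<lambda>y. cross_star_6k k y a b", OF entry block_index])
qed (auto simp: cross_star_6k_def)

lemma cross_star_6k_trunc: "cross_star_6k k (trunc k y) = cross_star_6k k y"
  by (intro ext, subst (1 2) cross_star_6k_expansion) (simp add: trunc_def)

lemma mat_vec_trunc:
  "mat_vec r (6 * (k + 1)) M (trunc k y) = mat_vec r (6 * (k + 1)) M y"
  by (auto simp: mat_vec_def trunc_def intro!: sum.cong)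

lemma mat_vec_pad_zero:
  "mat_vec (6 * (k + 1)) (6 * (k + 2)) (pad_zero k M) y = mat_vec (6 * (k + 1)) (6 * (k + 1)) M y"
  unfolding mat_vec_def pad_zero_def
  by (intro ext if_cong refl sum.mono_neutral_cong_right) auto

lemma Umat_eq_pad_zero_plus: "Umat k M a b = pad_zero k M a b + Umat k (\<lambda>_ _. 0) a b"
  by (simp add: Umat_def pad_zero_def)

lemma hat_cross_star_6k_mat_vec:
  "mat_vec (6 * (k + 1)) (6 * (k + 1)) (hat_cross_star_6k k x) y
     = mat_vec (6 * (k + 1)) (6 * (k + 1)) (cross_star_6k k y) x"
proof -
  let ?n = "6 * (k + 1)"
  let ?P = "\<lambda>M. (\<forall>a b. (?n \<le> a \<or> ?n \<le> b) \<longrightarrow> M a b = 0) \<and>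
    (\<forall>y. mat_vec ?n ?n M y = mat_vec ?n ?n (cross_star_6k k y) x)"
  define H where "H = (\<lambda>a c. if a < ?n \<and> c < ?n
      then (\<Sum>b<?n. cross_star_6k k (unit_vec c) a b * x b) else 0)"
  have "mat_vec ?n ?n H y a = mat_vec ?n ?n (cross_star_6k k y) x a" for y a
  proof (cases "a < ?n")
    case True
    have "(\<Sum>c<?n. H a c * y c) = (\<Sum>c<?n. \<Sum>b<?n. y c * cross_star_6k k (unit_vec c) a b * x b)"
      using True by (simp add: H_def sum_distrib_left sum_distrib_right mult_ac)
    also have "\<dots> = (\<Sum>b<?n. (\<Sum>c<?n. y c * cross_star_6k k (unit_vec c) a b) * x b)"
      by (subst sum.swap) (simp add: sum_distrib_right)
    finally show ?thesis
      using True by (simp add: mat_vec_def cross_star_6k_expansion[of k y])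
  qed (simp add: mat_vec_def)
  then have "?P H"
    by (auto simp: H_def)
  moreover have "M = H" if "?P M" for M
    using that \<open>?P H\<close> by (intro matrix_eqI_mat_vec[of ?n ?n]) auto
  ultimately have "?P (hat_cross_star_6k k x)"
    unfolding hat_cross_star_6k_def by (rule theI)
  then show ?thesis
    by blast
qed

lemma has_real_derivative_mat_vec:
  assumes "a < r"
      and M: "\<And>b. b < n \<Longrightarrow> ((\<lambda>e. M e a b) has_real_derivative dM a b) (at x within S)"
      and y: "\<And>b. b < n \<Longrightarrow> ((\<lambda>e. y e b) has_real_derivative dy b) (at x within S)"
  shows "((\<lambda>e. mat_vec r n (M e) (y e) a) has_real_derivative
           mat_vec r n (M x) dy a + mat_vec r n dM (y x) a) (at x within S)"
proof -
  have "((\<lambda>e. \<Sum>b<n. M e a b * y e b) has_real_derivative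
      (\<Sum>b<n. M x a b * dy b + dM a b * y x b)) (at x within S)"
    by (intro DERIV_sum DERIV_mult' M y) auto
  then show ?thesis
    using \<open>a < r\<close> by (simp add: mat_vec_def sum.distrib)
qed

lemma has_real_derivative_cross_star_6k:
  assumes "\<And>j. j < 6 * (k + 1) \<Longrightarrow> ((\<lambda>e. V e j) has_real_derivative dV j) (at x within S)"
  shows "((\<lambda>e. cross_star_6k k (V e) a b) has_real_derivative cross_star_6k k dV a b) (at x within S)"
proof -
  have "((\<lambda>e. \<Sum>c<6 * (k + 1). V e c * cross_star_6k k (unit_vec c) a b) has_real_derivative
      (\<Sum>c<6 * (k + 1). dV c * cross_star_6k k (unit_vec c) a b)) (at x within S)"
    by (intro DERIV_sum DERIV_cmult_right assms) auto
  then show ?thesis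
    by (simp only: flip: cross_star_6k_expansion)
qed

lemma has_real_derivative_Umat:
  assumes "((\<lambda>e. M e a b) has_real_derivative dM a b) (at x within S)"
  shows "((\<lambda>e. Umat k (M e) a b) has_real_derivative pad_zero k dM a b) (at x within S)"
proof -
  have "((\<lambda>e. pad_zero k (M e) a b) has_real_derivative pad_zero k dM a b) (at x within S)"
  proof (cases "a < 6 * (k + 1) \<and> b < 6 * (k + 1)")
    case True
    then show ?thesis
      using assms by (simp add: pad_zero_def)
  next
    case False
    then have "pad_zero k N a b = 0" for N
      by (auto simp: pad_zero_def)
    then show ?thesis
      by simp
  qed
  then have "((\<lambda>e. pad_zero k (M e) a b + Umat k (\<lambda>_ _. 0) a b) has_real_derivative
      pad_zero k dM a b + 0) (at x within S)"
    by (rule DERIV_add[OF _ DERIV_const])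
  then show ?thesis
    by (simp flip: Umat_eq_pad_zero_plus)
qed

lemma has_real_derivative_comp_force:
  assumes a: "a < 6 * (k + 1)"
      and dV: "\<And>j. j < 6 * (k + 1) \<Longrightarrow> ((\<lambda>e. V e j) has_real_derivative dV j) (at x within S)"
      and dh: "\<And>j. j < 6 * (k + 2) \<Longrightarrow> ((\<lambda>e. h e j) has_real_derivative dh j) (at x within S)"
  shows "((\<lambda>e. comp_force k (V e) (h e) a) has_real_derivative
      mat_vec (6 * (k + 1)) (6 * (k + 2)) (Umat k (cross_star_6k k (trunc k (V x)))) dh a
      + mat_vec (6 * (k + 1)) (6 * (k + 2)) (pad_zero k (hat_cross_star_6k k (trunc k (h x)))) dV a)
      (at x within S)"
proof -
  have dC: "((\<lambda>e. cross_star_6k k (trunc k (V e)) a b) has_real_derivative cross_star_6k k dV a b)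
      (at x within S)" for b
    unfolding cross_star_6k_trunc using dV by (rule has_real_derivative_cross_star_6k)
  have "((\<lambda>e. comp_force k (V e) (h e) a) has_real_derivative
      mat_vec (6 * (k + 1)) (6 * (k + 2)) (Umat k (cross_star_6k k (trunc k (V x)))) dh a
      + mat_vec (6 * (k + 1)) (6 * (k + 2)) (pad_zero k (cross_star_6k k dV)) (h x) a) (at x within S)"
    unfolding comp_force_def
    by (rule has_real_derivative_mat_vec[OF a]) (auto intro: has_real_derivative_Umat dC dh)
  moreover have "mat_vec (6 * (k + 1)) (6 * (k + 2)) (pad_zero k (cross_star_6k k dV)) (h x)
      = mat_vec (6 * (k + 1)) (6 * (k + 2)) (pad_zero k (hat_cross_star_6k k (trunc k (h x)))) dV"
    by (simp only: mat_vec_pad_zero hat_cross_star_6k_mat_vec mat_vec_trunc)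
  ultimately show ?thesis
    by simp
qed

theorem lemma5:
  fixes k :: nat
    and V h :: "real \<Rightarrow> nat \<Rightarrow> real"
    and dV dh :: "nat \<Rightarrow> real"
  assumes dV: "\<And>j. j < 6 * (k + 2) \<Longrightarrow> ((\<lambda>e. V e j) has_real_derivative dV j) (at 0)"
      and dh: "\<And>j. j < 6 * (k + 2) \<Longrightarrow> ((\<lambda>e. h e j) has_real_derivative dh j) (at 0)"
  shows "\<forall>a < 6 * (k + 1).
    ((\<lambda>e. comp_force k (V e) (h e) a) has_real_derivative
       (vec_add
          (mat_vec (6 * (k + 1)) (6 * (k + 2)) (Umat k (cross_star_6k k (trunc k (V 0)))) dh)
          (mat_vec (6 * (k + 1)) (6 * (k + 2)) (pad_zero k (hat_cross_star_6k k (trunc k (h 0)))) dV)) a)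
      (at 0)"
  unfolding vec_add_def
  by (intro allI impI has_real_derivative_comp_force) (auto intro: dV dh)

end
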